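(* If $G$ is a countably infinite HE-homogeneous graph satisfying property $(\ast)$, then $G$ is MB-homogeneous.
   Context: All graphs are undirected and loopless; subgraphs are induced. A homomorphism maps adjacent vertices to adjacent vertices; a monomorphism is an injective homomorphism; a bimorphism is a bijective endomorphism. $G$ is HE-homogeneous if every homomorphism between finite induced subgraphs of $G$ is the restriction of a surjective endomorphism of $G$; $G$ is MB-homogeneous if every monomorphism between finite induced subgraphs of $G$ is the restriction of a bimorphism of $G$. $G$ has property $(\ast)$ if for every surjective monomorphism $f:A\to B$ between finite induced subgraphs of $G$ and every vertex $c\notin A$ there exists a vertex $d\notin B$ such that $f\cup\{(c,d)\}$ is a homomorphism. *)

theory Defs
  imports Main "HOL-Library.Countable_Set"
begin

definition graph :: "'a set \<Rightarrow> ('a \<Rightarrow> 'a \<Rightarrow> bool) \<Rightarrow> bool" where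
  "graph V E \<longleftrightarrow> (\<forall>x y. E x y \<longrightarrow> x \<in> V \<and> y \<in> V) \<and> (\<forall>x y. E x y \<longrightarrow> E y x) \<and> (\<forall>x. \<not> E x x)"

definition is_hom :: "('a \<Rightarrow> 'a \<Rightarrow> bool) \<Rightarrow> 'a set \<Rightarrow> 'a set \<Rightarrow> ('a \<Rightarrow> 'a) \<Rightarrow> bool" where
  "is_hom E A B f \<longleftrightarrow> f ` A \<subseteq> B \<and> (\<forall>x\<in>A. \<forall>y\<in>A. E x y \<longrightarrow> E (f x) (f y))"

definition is_mono :: "('a \<Rightarrow> 'a \<Rightarrow> bool) \<Rightarrow> 'a set \<Rightarrow> 'a set \<Rightarrow> ('a \<Rightarrow> 'a) \<Rightarrow> bool" where
  "is_mono E A B f \<longleftrightarrow> is_hom E A B f \<and> inj_on f A"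

definition surj_endo :: "'a set \<Rightarrow> ('a \<Rightarrow> 'a \<Rightarrow> bool) \<Rightarrow> ('a \<Rightarrow> 'a) \<Rightarrow> bool" where
  "surj_endo V E g \<longleftrightarrow> is_hom E V V g \<and> g ` V = V"

definition bimorphism :: "'a set \<Rightarrow> ('a \<Rightarrow> 'a \<Rightarrow> bool) \<Rightarrow> ('a \<Rightarrow> 'a) \<Rightarrow> bool" where
  "bimorphism V E g \<longleftrightarrow> is_hom E V V g \<and> bij_betw g V V"

definition HE_homogeneous :: "'a set \<Rightarrow> ('a \<Rightarrow> 'a \<Rightarrow> bool) \<Rightarrow> bool" where
  "HE_homogeneous V E \<longleftrightarrow>
     (\<forall>A B f. finite A \<and> finite B \<and> A \<subseteq> V \<and> B \<subseteq> V \<and> is_hom E A B f \<longrightarrow>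
        (\<exists>g. surj_endo V E g \<and> (\<forall>x\<in>A. g x = f x)))"

definition MB_homogeneous :: "'a set \<Rightarrow> ('a \<Rightarrow> 'a \<Rightarrow> bool) \<Rightarrow> bool" where
  "MB_homogeneous V E \<longleftrightarrow>
     (\<forall>A B f. finite A \<and> finite B \<and> A \<subseteq> V \<and> B \<subseteq> V \<and> is_mono E A B f \<longrightarrow>
        (\<exists>g. bimorphism V E g \<and> (\<forall>x\<in>A. g x = f x)))"

definition prop_star :: "'a set \<Rightarrow> ('a \<Rightarrow> 'a \<Rightarrow> bool) \<Rightarrow> bool" where
  "prop_star V E \<longleftrightarrow>
     (\<forall>A B f c. finite A \<and> finite B \<and> A \<subseteq> V \<and> B \<subseteq> V \<and> is_mono E A B f \<and> f ` A = B
        \<and> c \<in> V \<and> c \<notin> A \<longrightarrow>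
        (\<exists>d. d \<in> V \<and> d \<notin> B \<and> is_hom E (insert c A) V (f(c := d))))"

end

theory Submission
  imports Defs
begin

text \<open>
  A back-and-forth argument. Enumerate V and extend a given finite partial monomorphism
  alternately in domain and range: property (\<ast>) extends the domain by a prescribed vertex,
  and HE-homogeneity extends the range by a prescribed vertex d, by extending the partial map
  to a surjective endomorphism g and adjoining a g-preimage of d. Since each stage is injective
  and edge-preserving, the union of the stages is an edge-preserving bijection of V.
\<close>

definition fin_partial_mono :: "'a set \<Rightarrow> ('a \<Rightarrow> 'a \<Rightarrow> bool) \<Rightarrow> 'a set \<Rightarrow> ('a \<Rightarrow> 'a) \<Rightarrow> bool" where
  "fin_partial_mono V E D h \<longleftrightarrow> finite D \<and> D \<subseteq> V \<and> is_mono E D V h"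

lemma is_hom_cong:
  assumes "\<forall>x\<in>A. f x = g x"
  shows "is_hom E A B f \<longleftrightarrow> is_hom E A B g"
  using assms by (simp add: is_hom_def image_def)

lemma fin_partial_mono_fun_upd:
  assumes "fin_partial_mono V E D h" "c \<in> V" "c \<notin> D" "d \<notin> h ` D"
    and "is_hom E (insert c D) V (h(c := d))"
  shows "fin_partial_mono V E (insert c D) (h(c := d))"
proof -
  have "inj_on (h(c := d)) D"
    using assms(1,4) by (intro inj_on_fun_updI) (auto simp: fin_partial_mono_def is_mono_def)
  moreover have "d \<notin> (h(c := d)) ` D"
    using assms(3,4) by auto
  ultimately show ?thesis
    using assms by (auto simp: fin_partial_mono_def is_mono_def)
qed

lemma fin_partial_mono_extend_domain:
  assumes "prop_star V E" "fin_partial_mono V E D h" "c \<in> V" "c \<notin> D"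
  shows "\<exists>d. d \<notin> h ` D \<and> fin_partial_mono V E (insert c D) (h(c := d))"
proof -
  have "is_mono E D (h ` D) h"
    using assms(2) by (auto simp: fin_partial_mono_def is_mono_def is_hom_def)
  then obtain d where "d \<notin> h ` D" "is_hom E (insert c D) V (h(c := d))"
    using assms(1)[unfolded prop_star_def, rule_format, of D "h ` D" h c] assms(2-4)
    by (auto simp: fin_partial_mono_def is_mono_def is_hom_def)
  with assms show ?thesis
    by (blast intro: fin_partial_mono_fun_upd)
qed

lemma fin_partial_mono_extend_range:
  assumes "HE_homogeneous V E" "fin_partial_mono V E D h" "d \<in> V" "d \<notin> h ` D"
  shows "\<exists>c. c \<notin> D \<and> fin_partial_mono V E (insert c D) (h(c := d))"
proof -
  have "is_hom E D (h ` D) h" "finite (h ` D)" "h ` D \<subseteq> V"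
    using assms(2) by (auto simp: fin_partial_mono_def is_mono_def is_hom_def)
  then obtain g where g: "surj_endo V E g" "\<forall>x\<in>D. g x = h x"
    using assms(1)[unfolded HE_homogeneous_def, rule_format, of D "h ` D" h] assms(2)
    by (auto simp: fin_partial_mono_def)
  have "d \<in> g ` V"
    using g(1) assms(3) by (simp add: surj_endo_def)
  then obtain c where c: "c \<in> V" "g c = d"
    by blast
  have "c \<notin> D"
    using c g(2) assms(4) by force
  have "\<forall>x\<in>insert c D. (h(c := d)) x = g x"
    using g(2) c by auto
  moreover have "insert c D \<subseteq> V"
    using c assms(2) by (auto simp: fin_partial_mono_def)
  then have "is_hom E (insert c D) V g"
    using g(1) unfolding surj_endo_def is_hom_def by blast
  ultimately have "is_hom E (insert c D) V (h(c := d))"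
    using is_hom_cong by blast
  with assms \<open>c \<in> V\<close> \<open>c \<notin> D\<close> show ?thesis
    by (blast intro: fin_partial_mono_fun_upd)
qed

lemma fin_partial_mono_back_and_forth_step:
  assumes "prop_star V E" "HE_homogeneous V E" "fin_partial_mono V E D h" "x \<in> V"
  shows "\<exists>D' h'. fin_partial_mono V E D' h' \<and> D \<subseteq> D' \<and> (\<forall>y\<in>D. h' y = h y)
                  \<and> x \<in> D' \<and> x \<in> h' ` D'"
proof -
  obtain h1 where h1: "fin_partial_mono V E (insert x D) h1" "\<forall>y\<in>D. h1 y = h y"
  proof (cases "x \<in> D")
    case True
    with assms(3) have "fin_partial_mono V E (insert x D) h"
      by (simp add: insert_absorb)
    then show ?thesis
      by (rule that) simp
  next
    case False
    obtain d where "fin_partial_mono V E (insert x D) (h(x := d))"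
      using fin_partial_mono_extend_domain[OF assms(1,3,4) False] by blast
    then show ?thesis
      by (rule that) (simp add: False)
  qed
  show ?thesis
  proof (cases "x \<in> h1 ` insert x D")
    case True
    with h1 show ?thesis
      by (intro exI[of _ "insert x D"] exI[of _ h1]) auto
  next
    case False
    obtain c where
      "c \<notin> insert x D" "fin_partial_mono V E (insert c (insert x D)) (h1(c := x))"
      using fin_partial_mono_extend_range[OF assms(2) h1(1) assms(4) False] by blast
    with h1(2) show ?thesis
      by (intro exI[of _ "insert c (insert x D)"] exI[of _ "h1(c := x)"]) auto
  qed
qed

lemma back_and_forth:
  fixes P :: "'a set \<Rightarrow> ('a \<Rightarrow> 'a) \<Rightarrow> bool"
  assumes "countable V" "V \<noteq> {}" "P D\<^sub>0 h\<^sub>0"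
    and step: "\<And>D h x. P D h \<Longrightarrow> x \<in> V \<Longrightarrow>
      \<exists>D' h'. P D' h' \<and> D \<subseteq> D' \<and> (\<forall>y\<in>D. h' y = h y) \<and> x \<in> D' \<and> x \<in> h' ` D'"
  obtains g where "\<forall>x\<in>D\<^sub>0. g x = h\<^sub>0 x"
    and "\<And>F. finite F \<Longrightarrow> F \<subseteq> V \<Longrightarrow>
      \<exists>D h. P D h \<and> F \<subseteq> D \<and> F \<subseteq> h ` D \<and> (\<forall>x\<in>D. g x = h x)"
proof -
  define v where "v = from_nat_into V"
  have "\<exists>s. \<forall>n. (P (fst (s n)) (snd (s n)) \<and> (n = 0 \<longrightarrow> s n = (D\<^sub>0, h\<^sub>0))) \<and>
      fst (s n) \<subseteq> fst (s (Suc n)) \<and> (\<forall>y\<in>fst (s n). snd (s (Suc n)) y = snd (s n) y) \<and>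
      v n \<in> fst (s (Suc n)) \<and> v n \<in> snd (s (Suc n)) ` fst (s (Suc n))"
  proof (rule dependent_nat_choice)
    show "\<exists>p. P (fst p) (snd p) \<and> (0 = (0::nat) \<longrightarrow> p = (D\<^sub>0, h\<^sub>0))"
      using assms(3) by auto
  next
    fix p and n :: nat
    assume "P (fst p) (snd p) \<and> (n = 0 \<longrightarrow> p = (D\<^sub>0, h\<^sub>0))"
    moreover have "v n \<in> V"
      unfolding v_def using assms(2) by (rule from_nat_into)
    ultimately obtain D' h' where "P D' h'" "fst p \<subseteq> D'" "\<forall>y\<in>fst p. h' y = snd p y"
      "v n \<in> D'" "v n \<in> h' ` D'"
      using step[of "fst p" "snd p" "v n"] by blast
    then show "\<exists>q. (P (fst q) (snd q) \<and> (Suc n = 0 \<longrightarrow> q = (D\<^sub>0, h\<^sub>0))) \<and>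
      fst p \<subseteq> fst q \<and> (\<forall>y\<in>fst p. snd q y = snd p y) \<and> v n \<in> fst q \<and> v n \<in> snd q ` fst q"
      by (intro exI[of _ "(D', h')"]) simp
  qed
  then obtain s where s: "\<And>n. P (fst (s n)) (snd (s n))" "s 0 = (D\<^sub>0, h\<^sub>0)"
    "\<And>n. fst (s n) \<subseteq> fst (s (Suc n))" "\<And>n. \<forall>y\<in>fst (s n). snd (s (Suc n)) y = snd (s n) y"
    "\<And>n. v n \<in> fst (s (Suc n))" "\<And>n. v n \<in> snd (s (Suc n)) ` fst (s (Suc n))"
    by blast
  define Ds where "Ds n = fst (s n)" for n
  define hs where "hs n = snd (s n)" for n
  have mono: "Ds m \<subseteq> Ds n \<and> (\<forall>x\<in>Ds m. hs n x = hs m x)" if "m \<le> n" for m n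
    using that
  proof (induction n rule: dec_induct)
    case (step k)
    with s(3,4)[of k] show ?case
      unfolding Ds_def hs_def by auto
  qed simp
  then have image_mono: "hs m ` Ds m \<subseteq> hs n ` Ds n" if "m \<le> n" for m n
    using that by (metis image_cong image_mono)
  have visited: "\<exists>n. x \<in> Ds n \<and> x \<in> hs n ` Ds n" if "x \<in> V" for x
    using from_nat_into_surj[OF assms(1) that] s(5,6) unfolding v_def Ds_def hs_def by metis
  have cover: "\<exists>n. F \<subseteq> Ds n \<and> F \<subseteq> hs n ` Ds n" if "finite F" "F \<subseteq> V" for F
  proof -
    obtain k where k: "\<forall>x\<in>F. x \<in> Ds (k x) \<and> x \<in> hs (k x) ` Ds (k x)"
      using bchoice visited \<open>F \<subseteq> V\<close> by (metis subsetD)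
    obtain N where "k ` F \<subseteq> {..<N}"
      using finite_nat_bounded \<open>finite F\<close> by blast
    then have "k x \<le> N" if "x \<in> F" for x
      using that by auto
    then have "F \<subseteq> Ds N" "F \<subseteq> hs N ` Ds N"
      using k mono image_mono by fast+
    then show ?thesis
      by blast
  qed
  define g where "g x = hs (LEAST n. x \<in> Ds n) x" for x
  have g: "g x = hs n x" if "x \<in> Ds n" for x n
  proof -
    have "(LEAST n. x \<in> Ds n) \<le> n" "x \<in> Ds (LEAST n. x \<in> Ds n)"
      using that by (auto intro: Least_le LeastI)
    then show ?thesis
      unfolding g_def using mono that by metis
  qed
  have "\<forall>x\<in>D\<^sub>0. g x = h\<^sub>0 x"
    using g[of _ 0] s(2) unfolding Ds_def hs_def by simp
  moreover have "\<exists>D h. P D h \<and> F \<subseteq> D \<and> F \<subseteq> h ` D \<and> (\<forall>x\<in>D. g x = h x)"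
    if F: "finite F" "F \<subseteq> V" for F
  proof -
    obtain n where "F \<subseteq> Ds n" "F \<subseteq> hs n ` Ds n"
      using cover[OF F] by blast
    moreover have "P (Ds n) (hs n)"
      using s(1) unfolding Ds_def hs_def .
    ultimately show ?thesis
      using g by blast
  qed
  ultimately show thesis
    by (rule that)
qed

lemma bimorphism_if_locally_fin_partial_mono:
  assumes "\<And>F. finite F \<Longrightarrow> F \<subseteq> V \<Longrightarrow>
    \<exists>D h. fin_partial_mono V E D h \<and> F \<subseteq> D \<and> F \<subseteq> h ` D \<and> (\<forall>x\<in>D. g x = h x)"
  shows "bimorphism V E g"
proof -
  have pair: "g x \<in> V \<and> (E x y \<longrightarrow> E (g x) (g y)) \<and> (g x = g y \<longrightarrow> x = y)"
    if xy: "x \<in> V" "y \<in> V" for x y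
  proof -
    obtain D h where "fin_partial_mono V E D h" "x \<in> D" "y \<in> D" "\<forall>z\<in>D. g z = h z"
      using assms[of "{x, y}"] xy by auto
    then show ?thesis
      by (auto simp: fin_partial_mono_def is_mono_def is_hom_def dest: inj_onD)
  qed
  have onto: "y \<in> g ` V" if y: "y \<in> V" for y
  proof -
    obtain D h where "fin_partial_mono V E D h" "y \<in> h ` D" "\<forall>z\<in>D. g z = h z"
      using assms[of "{y}"] y by auto
    then show ?thesis
      by (force simp: fin_partial_mono_def)
  qed
  have "g ` V = V"
    using pair onto by blast
  moreover have "inj_on g V"
    using pair by (blast intro: inj_onI)
  moreover have "\<forall>x\<in>V. \<forall>y\<in>V. E x y \<longrightarrow> E (g x) (g y)"
    using pair by blast
  ultimately show ?thesis
    by (simp add: bimorphism_def is_hom_def bij_betw_def)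
qed

theorem proposition4p6:
  fixes V :: "'a set" and E :: "'a \<Rightarrow> 'a \<Rightarrow> bool"
  assumes "graph V E"
    and "countable V" and "infinite V"
    and "HE_homogeneous V E"
    and "prop_star V E"
  shows "MB_homogeneous V E"
  unfolding MB_homogeneous_def
proof (intro allI impI)
  fix A B f
  assume "finite A \<and> finite B \<and> A \<subseteq> V \<and> B \<subseteq> V \<and> is_mono E A B f"
  then have A: "fin_partial_mono V E A f"
    by (auto simp: fin_partial_mono_def is_mono_def is_hom_def)
  have "V \<noteq> {}"
    using \<open>infinite V\<close> by auto
  obtain g where g: "\<forall>x\<in>A. g x = f x" "\<And>F. finite F \<Longrightarrow> F \<subseteq> V \<Longrightarrow>
      \<exists>D h. fin_partial_mono V E D h \<and> F \<subseteq> D \<and> F \<subseteq> h ` D \<and> (\<forall>x\<in>D. g x = h x)"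
    using back_and_forth[OF assms(2) \<open>V \<noteq> {}\<close> A
        fin_partial_mono_back_and_forth_step[OF assms(5,4)]] by blast
  have "bimorphism V E g"
    using g(2) by (rule bimorphism_if_locally_fin_partial_mono)
  with g(1) show "\<exists>g. bimorphism V E g \<and> (\<forall>x\<in>A. g x = f x)"
    by blast
qed

end
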